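(* Let $0<\kappa<1$, $0<h<\frac12$, $h_n=h2^{-n-1}$, and $a,b,c,C\ge0$. Let $\nu_n,\zeta_n,\eta_n,\epsilon_n$ ($n\ge0$) be non-negative sequences with $\nu_n\le C\kappa^{-2b}h_n^{-2a}\zeta_n^c(\zeta_n+\eta_n)\epsilon_n$ for $n\ge0$, and, for $n\ge1$, $\zeta_n\le\zeta_{n-1}+\nu_{n-1}$, $\eta_n\le\eta_{n-1}+\nu_{n-1}$, $\epsilon_n\le\nu_{n-1}\epsilon_{n-1}$, with $\zeta_0=\zeta\ge1$, $\eta_0=0$, $\epsilon_0=\epsilon$. Then there is $C'=C'(C,a,b,c)>0$ such that if for some $\varsigma\le1$ $$\epsilon<\frac{\varsigma}{C'}\kappa^{2b+1}h^{2a+1}\zeta^{-c-2},$$ then for all $n\ge0$: $\epsilon_n\le(\kappa h\zeta^{-1})^{2^n-1}\epsilon$ and $\eta_n<\varsigma\zeta_n^{-1}$. *)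

theory Defs
  imports Complex_Main
begin

end

theory Submission
  imports Defs
begin

text \<open>Put \<open>q = \<kappa>h/\<zeta> \<le> 1/2\<close> and \<open>B = 4\<^sup>a\<close>, so that \<open>h\<^sub>n\<^sup>-\<^sup>2\<^sup>a = h\<^sup>-\<^sup>2\<^sup>a 4\<^sup>a B\<^sup>n\<close>. As long as
  \<open>\<zeta>\<^sub>n \<le> 2\<zeta>\<close> and \<open>\<zeta>\<^sub>n + \<eta>\<^sub>n \<le> 3\<zeta>\<close>, the hypothesis on \<open>\<nu>\<^sub>n\<close> reads \<open>\<nu>\<^sub>n \<le> A B\<^sup>n \<epsilon>\<^sub>n\<close> with \<open>A\<close>
  independent of \<open>n\<close>. If \<open>A\<epsilon>B \<le> q\<close>, induction gives \<open>\<epsilon>\<^sub>n B\<^sup>n \<le> q\<^bsup>2\<^sup>n\<^sup>-\<^sup>1\<^esup> \<epsilon>\<close>: the factor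
  \<open>B\<close> lost at each step is absorbed by the squaring of \<open>\<epsilon>\<^sub>n\<close>. Then \<open>\<nu>\<^sub>n \<le> A\<epsilon> 2\<^sup>-\<^sup>n\<close>,
  so \<open>\<zeta>\<^sub>n - \<zeta>\<close> and \<open>\<eta>\<^sub>n\<close> stay below the geometric sum \<open>2A\<epsilon>\<close>, which closes the bootstrap;
  the smallness condition on \<open>\<epsilon>\<close> is exactly what makes \<open>2A\<epsilon> \<le> \<sigma>q/2\<close>.\<close>

lemma power_two_pow_minus_one_le_half_pow:
  fixes q :: real
  assumes "0 \<le> q" "q \<le> 1/2"
  shows "q ^ (2^n - 1) \<le> (1/2) ^ n"
proof -
  have "q ^ (2^n - 1) \<le> (1/2) ^ (2^n - 1)"
    using assms by (intro power_mono) auto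
  also have "\<dots> \<le> (1/2) ^ n"
    using less_exp[of n] by (intro power_decreasing) linarith+
  finally show ?thesis .
qed

lemma power_two_pow_Suc_minus_one:
  fixes q :: "'a::comm_monoid_mult"
  shows "q ^ (2 ^ Suc n - 1) = q * (q ^ (2^n - 1))\<^sup>2"
proof -
  obtain m where "(2::nat) ^ n = Suc m"
    using not0_implies_Suc[of "2^n"] by auto
  then have "(2::nat) ^ Suc n - 1 = Suc (2 * (2^n - 1))" by simp
  then show ?thesis
    by (simp add: power_mult[symmetric] mult.commute)
qed

lemma doubling_recursion_bound:
  fixes A B q \<epsilon> \<zeta> :: real and \<nu> \<zeta>s \<eta> \<epsilon>s :: "nat \<Rightarrow> real"
  assumes A: "0 \<le> A" and B: "1 \<le> B" and q: "0 \<le> q" "q \<le> 1/2" and \<epsilon>: "0 \<le> \<epsilon>"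
    and small: "A * \<epsilon> * B \<le> q"
    and \<epsilon>s_nonneg: "\<And>n. 0 \<le> \<epsilon>s n"
    and \<nu>_le: "\<And>n. \<zeta>s n \<le> \<zeta> + 2*A*\<epsilon> \<Longrightarrow> \<eta> n \<le> 2*A*\<epsilon> \<Longrightarrow> \<nu> n \<le> A * B^n * \<epsilon>s n"
    and rec: "\<And>n. \<zeta>s (Suc n) \<le> \<zeta>s n + \<nu> n" "\<And>n. \<eta> (Suc n) \<le> \<eta> n + \<nu> n"
      "\<And>n. \<epsilon>s (Suc n) \<le> \<nu> n * \<epsilon>s n"
    and init: "\<zeta>s 0 = \<zeta>" "\<eta> 0 = 0" "\<epsilon>s 0 = \<epsilon>"
  shows "\<epsilon>s n * B^n \<le> q ^ (2^n - 1) * \<epsilon> \<and> \<eta> n \<le> 2*A*\<epsilon> * (1 - (1/2)^n)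
    \<and> \<zeta>s n \<le> \<zeta> + 2*A*\<epsilon> * (1 - (1/2)^n)"
proof (induction n)
  case 0
  then show ?case using init by simp
next
  case (Suc n)
  define p where "p = q ^ (2^n - 1)"
  have IH: "\<epsilon>s n * B^n \<le> p * \<epsilon>" "\<eta> n \<le> 2*A*\<epsilon> * (1 - (1/2)^n)"
    "\<zeta>s n \<le> \<zeta> + 2*A*\<epsilon> * (1 - (1/2)^n)"
    using Suc p_def by auto
  have A\<epsilon>: "0 \<le> A * \<epsilon>" using A \<epsilon> by simp
  have p: "0 \<le> p" "p \<le> (1/2)^n"
    using q power_two_pow_minus_one_le_half_pow[OF q] by (auto simp: p_def)
  have "2*A*\<epsilon> * (1 - (1/2)^n) \<le> 2*A*\<epsilon>"
    using A\<epsilon> by (simp add: mult_left_le)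
  then have "\<nu> n \<le> A * B^n * \<epsilon>s n"
    using \<nu>_le IH by simp
  also have "\<dots> = A * (\<epsilon>s n * B^n)" by simp
  also have "\<dots> \<le> A * (p * \<epsilon>)" using IH(1) A by (rule mult_left_mono)
  finally have \<nu>: "\<nu> n \<le> A * \<epsilon> * p" by (simp add: ac_simps)
  also have "\<dots> \<le> A * \<epsilon> * (1/2)^n" using p A\<epsilon> by (intro mult_left_mono)
  finally have \<nu>_half: "\<nu> n \<le> A * \<epsilon> * (1/2)^n" .
  have "\<epsilon>s (Suc n) * B ^ Suc n \<le> \<nu> n * (\<epsilon>s n * B^n) * B"
    using rec(3)[of n] B by (simp add: mult_right_mono)
  also have "\<dots> \<le> (A * \<epsilon> * p) * (p * \<epsilon>) * B"
    using \<nu> IH(1) \<epsilon>s_nonneg[of n] A\<epsilon> p B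
    by (intro mult_right_mono[OF mult_mono]) auto
  also have "\<dots> = (A * \<epsilon> * B) * p\<^sup>2 * \<epsilon>" by (simp add: power2_eq_square)
  also have "\<dots> \<le> q * p\<^sup>2 * \<epsilon>" using small \<epsilon> by (intro mult_right_mono) auto
  also have "\<dots> = q ^ (2 ^ Suc n - 1) * \<epsilon>"
    by (simp only: p_def power_two_pow_Suc_minus_one)
  finally show ?case
    using rec(1,2)[of n] IH(2,3) \<nu>_half by (simp add: algebra_simps)
qed

lemma dyadic_scale_powr:
  fixes h a :: real
  assumes "0 < h"
  shows "(h * 2 powr (-(real n) - 1)) powr (-2*a) = h powr (-2*a) * 4 powr a * (4 powr a)^n"
proof -
  have four: "4 powr t = 2 powr (2*t)" for t :: real
    by (simp add: powr_powr[symmetric])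
  have "(h * 2 powr (-(real n) - 1)) powr (-2*a) = h powr (-2*a) * 2 powr ((-(real n) - 1) * (-2*a))"
    using assms by (simp add: powr_mult powr_powr)
  also have "\<dots> = h powr (-2*a) * 4 powr a * 4 powr (real n * a)"
    by (simp add: four powr_add[symmetric] algebra_simps)
  finally show ?thesis by (simp add: powr_power)
qed

lemma powr_exponents_cancel:
  fixes \<kappa> h \<zeta> a b c :: real
  assumes "0 < \<kappa>" "0 < h" "0 < \<zeta>"
  shows "(\<kappa> powr (-2*b) * h powr (-2*a) * \<zeta> powr (c+1))
    * (\<kappa> powr (2*b+1) * h powr (2*a+1) * \<zeta> powr (-c-2)) = \<kappa> * h / \<zeta>"
proof -
  have "(\<kappa> powr (-2*b) * h powr (-2*a) * \<zeta> powr (c+1))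
      * (\<kappa> powr (2*b+1) * h powr (2*a+1) * \<zeta> powr (-c-2))
    = \<kappa> powr (-2*b + (2*b+1)) * h powr (-2*a + (2*a+1)) * \<zeta> powr (c+1 + (-c-2))"
    by (simp only: powr_add ac_simps)
  also have "\<dots> = \<kappa> * h * \<zeta> powr (-1)" using assms by simp
  finally show ?thesis using assms by (simp add: powr_minus divide_inverse)
qed

text \<open>The left-hand side is \<open>A\<epsilon>B\<close>; it equals \<open>(K/4) \<kappa>\<^sup>-\<^sup>2\<^sup>b h\<^sup>-\<^sup>2\<^sup>a \<zeta>\<^sup>c\<^sup>+\<^sup>1 \<epsilon>\<close>, whose powers are
  exactly complementary to those in the smallness hypothesis.\<close>

lemma small_epsilon_scaled:
  fixes a b c C \<kappa> h \<zeta> \<epsilon> \<sigma> :: real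
  assumes "0 \<le> C" "0 < \<kappa>" "0 < h" "0 < \<zeta>" "0 \<le> \<epsilon>"
    and \<epsilon>_less: "\<epsilon> < \<sigma> / (12 * C * 16 powr a * 2 powr c + 1)
      * \<kappa> powr (2*b+1) * h powr (2*a+1) * \<zeta> powr (-c-2)"
  shows "0 < \<sigma>"
    and "C * \<kappa> powr (-2*b) * h powr (-2*a) * 4 powr a * (2*\<zeta>) powr c * (3*\<zeta>) * \<epsilon> * 4 powr a
      \<le> \<sigma> * (\<kappa> * h / \<zeta>) / 4"
proof -
  define K where "K = 12 * C * 16 powr a * 2 powr c"
  define X where "X = \<kappa> powr (-2*b) * h powr (-2*a) * \<zeta> powr (c+1)"
  define Y where "Y = \<kappa> powr (2*b+1) * h powr (2*a+1) * \<zeta> powr (-c-2)"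
  have K0: "0 \<le> K" using assms by (simp add: K_def)
  have Y0: "0 \<le> Y" by (simp add: Y_def)
  have \<epsilon>_less': "\<epsilon> < \<sigma> / (K + 1) * Y" using \<epsilon>_less by (simp add: K_def Y_def ac_simps)
  show \<sigma>0: "0 < \<sigma>"
  proof (rule ccontr)
    assume "\<not> 0 < \<sigma>"
    then have "\<sigma> / (K + 1) * Y \<le> 0"
      using K0 Y0 by (intro mult_nonpos_nonneg divide_nonpos_pos) auto
    then show False using \<epsilon>_less' \<open>0 \<le> \<epsilon>\<close> by linarith
  qed
  have "C * \<kappa> powr (-2*b) * h powr (-2*a) * 4 powr a * (2*\<zeta>) powr c * (3*\<zeta>) * \<epsilon> * 4 powr a
      = K / 4 * X * \<epsilon>"
    using \<open>0 < \<zeta>\<close> by (simp add: K_def X_def powr_mult powr_add algebra_simps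
        flip: powr_mult[of 4 4, simplified])
  also have "\<dots> \<le> K / 4 * X * (\<sigma> / (K + 1) * Y)"
    using K0 \<epsilon>_less' by (intro mult_left_mono) (auto simp: X_def)
  also have "\<dots> = K / (K + 1) * (\<sigma> / 4) * (X * Y)" using K0 by (simp add: field_simps)
  also have "X * Y = \<kappa> * h / \<zeta>"
    using powr_exponents_cancel[of \<kappa> h \<zeta> b a c] assms by (simp add: X_def Y_def)
  also have "K / (K + 1) * (\<sigma> / 4) * (\<kappa> * h / \<zeta>) \<le> 1 * (\<sigma> / 4) * (\<kappa> * h / \<zeta>)"
    using K0 \<sigma>0 assms by (intro mult_right_mono) auto
  finally show "C * \<kappa> powr (-2*b) * h powr (-2*a) * 4 powr a * (2*\<zeta>) powr c * (3*\<zeta>) * \<epsilon> * 4 powr a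
      \<le> \<sigma> * (\<kappa> * h / \<zeta>) / 4" by simp
qed

lemma dyadic_bound_geometric:
  fixes a b c C \<kappa> h \<zeta> v z t e :: real
  assumes "0 \<le> c" "0 \<le> C" "0 < h" "0 < \<zeta>" "0 \<le> z" "0 \<le> t" "0 \<le> e"
    and "z \<le> 2*\<zeta>" "z + t \<le> 3*\<zeta>"
    and v: "v \<le> C * \<kappa> powr (-2*b) * (h * 2 powr (-(real n) - 1)) powr (-2*a)
      * (if c = 0 then 1 else z powr c) * (z + t) * e"
  shows "v \<le> C * \<kappa> powr (-2*b) * h powr (-2*a) * 4 powr a * (2*\<zeta>) powr c * (3*\<zeta>)
    * (4 powr a)^n * e"
proof -
  have "(if c = 0 then 1 else z powr c) \<le> (2*\<zeta>) powr c"
    using assms by (auto intro: powr_mono2)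
  then have "v \<le> C * \<kappa> powr (-2*b) * (h * 2 powr (-(real n) - 1)) powr (-2*a)
      * (2*\<zeta>) powr c * (3*\<zeta>) * e"
    using v assms by (elim order_trans) (intro mult_right_mono mult_mono mult_left_mono; simp)
  then show ?thesis unfolding dyadic_scale_powr[OF \<open>0 < h\<close>] by (simp add: ac_simps)
qed

lemma doubly_exponential_decay_with_constant:
  fixes a b c C \<kappa> h \<zeta> \<epsilon> \<sigma> :: real and \<nu> \<zeta>s \<eta> \<epsilon>s :: "nat \<Rightarrow> real"
  assumes abc: "0 \<le> a" "0 \<le> c" "0 \<le> C"
    and \<kappa>h: "0 < \<kappa>" "\<kappa> < 1" "0 < h" "h < 1/2"
    and nonneg: "\<And>n. 0 \<le> \<zeta>s n" "\<And>n. 0 \<le> \<eta> n" "\<And>n. 0 \<le> \<epsilon>s n"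
    and \<nu>_le: "\<And>n. \<nu> n \<le> C * \<kappa> powr (-2*b) * (h * 2 powr (-(real n) - 1)) powr (-2*a)
      * (if c = 0 then 1 else \<zeta>s n powr c) * (\<zeta>s n + \<eta> n) * \<epsilon>s n"
    and rec: "\<And>n. 1 \<le> n \<Longrightarrow> \<zeta>s n \<le> \<zeta>s (n-1) + \<nu> (n-1)"
      "\<And>n. 1 \<le> n \<Longrightarrow> \<eta> n \<le> \<eta> (n-1) + \<nu> (n-1)"
      "\<And>n. 1 \<le> n \<Longrightarrow> \<epsilon>s n \<le> \<nu> (n-1) * \<epsilon>s (n-1)"
    and init: "\<zeta>s 0 = \<zeta>" "\<eta> 0 = 0" "\<epsilon>s 0 = \<epsilon>"
    and \<zeta>: "1 \<le> \<zeta>" and \<sigma>: "\<sigma> \<le> 1"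
    and \<epsilon>_small: "\<epsilon> < \<sigma> / (12 * C * 16 powr a * 2 powr c + 1)
      * \<kappa> powr (2*b+1) * h powr (2*a+1) * \<zeta> powr (-c-2)"
  shows "\<epsilon>s n \<le> (\<kappa> * h / \<zeta>) ^ (2^n - 1) * \<epsilon>" and "\<eta> n * \<zeta>s n < \<sigma>"
proof -
  define q where "q = \<kappa> * h / \<zeta>"
  define B where "B = 4 powr a"
  define A where "A = C * \<kappa> powr (-2*b) * h powr (-2*a) * 4 powr a * (2*\<zeta>) powr c * (3*\<zeta>)"
  have \<zeta>0: "0 < \<zeta>" using \<zeta> by simp
  have \<epsilon>0: "0 \<le> \<epsilon>" using nonneg(3)[of 0] init by simp
  have A0: "0 \<le> A" using abc \<zeta>0 by (simp add: A_def)
  have B1: "1 \<le> B" using abc by (simp add: B_def ge_one_powr_ge_zero)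
  have \<kappa>h1: "\<kappa> * h < 1/2" using \<kappa>h mult_strict_mono[of \<kappa> 1 h "1/2"] by simp
  have q: "0 < q" "q \<le> 1/2"
    using \<kappa>h \<zeta> \<kappa>h1 by (auto simp: q_def divide_le_eq intro: order_trans[of _ "\<kappa> * h"])
  note small = small_epsilon_scaled[OF abc(3) \<kappa>h(1,3) \<zeta>0 \<epsilon>0 \<epsilon>_small]
  have A\<epsilon>B: "A * \<epsilon> * B \<le> \<sigma> * q / 4" using small(2) by (simp add: A_def B_def q_def)
  have A\<epsilon>: "2 * A * \<epsilon> \<le> \<sigma> * q / 2"
    using A\<epsilon>B mult_left_mono[OF B1, of "A * \<epsilon>"] A0 \<epsilon>0 by simp
  have \<sigma>q: "\<sigma> * q \<le> q" using \<sigma> q mult_right_mono[of \<sigma> 1 q] by simp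
  then have A\<epsilon>_\<zeta>: "2 * A * \<epsilon> \<le> \<zeta>" using A\<epsilon> \<zeta> q by linarith
  have \<nu>_geom: "\<nu> n \<le> A * B^n * \<epsilon>s n" if "\<zeta>s n \<le> \<zeta> + 2*A*\<epsilon>" "\<eta> n \<le> 2*A*\<epsilon>" for n
    using dyadic_bound_geometric[OF abc(2,3) \<kappa>h(3) \<zeta>0 nonneg _ _ \<nu>_le] that A\<epsilon>_\<zeta>
    by (simp add: A_def B_def)
  have rec_Suc: "\<zeta>s (Suc m) \<le> \<zeta>s m + \<nu> m" "\<eta> (Suc m) \<le> \<eta> m + \<nu> m"
    "\<epsilon>s (Suc m) \<le> \<nu> m * \<epsilon>s m" for m
    using rec[of "Suc m"] by simp_all
  have bound: "\<epsilon>s n * B^n \<le> q ^ (2^n - 1) * \<epsilon> \<and> \<eta> n \<le> 2*A*\<epsilon> * (1 - (1/2)^n)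
      \<and> \<zeta>s n \<le> \<zeta> + 2*A*\<epsilon> * (1 - (1/2)^n)"
    using A\<epsilon>B \<sigma>q q
    by (intro doubling_recursion_bound[OF A0 B1 _ q(2) \<epsilon>0 _ nonneg(3) \<nu>_geom rec_Suc init]) linarith+
  have "\<epsilon>s n \<le> \<epsilon>s n * B^n" using B1 nonneg(3)[of n] by (simp add: mult_le_cancel_left1)
  then show "\<epsilon>s n \<le> (\<kappa> * h / \<zeta>) ^ (2^n - 1) * \<epsilon>" using bound by (simp add: q_def)
  have "2*A*\<epsilon> * (1 - (1/2)^n) \<le> 2*A*\<epsilon>" using A0 \<epsilon>0 by (simp add: mult_left_le)
  then have "\<eta> n * \<zeta>s n \<le> (\<sigma> * q / 2) * (2 * \<zeta>)"
    using bound A\<epsilon> A\<epsilon>_\<zeta> nonneg[of n] small(1) q by (intro mult_mono) auto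
  also have "\<dots> = \<sigma> * (\<kappa> * h)" using \<zeta>0 by (simp add: q_def)
  also have "\<dots> < \<sigma>" using small(1) \<kappa>h1 by simp
  finally show "\<eta> n * \<zeta>s n < \<sigma>" .
qed

theorem lemma8p6:
  fixes a b c C :: real
  assumes "a \<ge> 0" "b \<ge> 0" "c \<ge> 0" "C \<ge> 0"
  shows "\<exists>C'>0. \<forall>(\<kappa>::real) (h::real) (\<nu>::nat \<Rightarrow> real) (\<zeta>s::nat \<Rightarrow> real)
           (\<eta>::nat \<Rightarrow> real) (\<epsilon>s::nat \<Rightarrow> real) (\<zeta>::real) (\<epsilon>::real) (\<sigma>::real).
     0 < \<kappa> \<and> \<kappa> < 1 \<and> 0 < h \<and> h < 1/2 \<and>
     (\<forall>n. 0 \<le> \<nu> n \<and> 0 \<le> \<zeta>s n \<and> 0 \<le> \<eta> n \<and> 0 \<le> \<epsilon>s n) \<and>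
     (\<forall>n. \<nu> n \<le> C * \<kappa> powr (-2*b) * (h * 2 powr (-(real n) - 1)) powr (-2*a)
                  * (if c = 0 then 1 else \<zeta>s n powr c) * (\<zeta>s n + \<eta> n) * \<epsilon>s n) \<and>
     (\<forall>n\<ge>1. \<zeta>s n \<le> \<zeta>s (n-1) + \<nu> (n-1) \<and> \<eta> n \<le> \<eta> (n-1) + \<nu> (n-1)
              \<and> \<epsilon>s n \<le> \<nu> (n-1) * \<epsilon>s (n-1)) \<and>
     \<zeta>s 0 = \<zeta> \<and> \<zeta> \<ge> 1 \<and> \<eta> 0 = 0 \<and> \<epsilon>s 0 = \<epsilon> \<and>
     \<sigma> \<le> 1 \<and>
     \<epsilon> < \<sigma> / C' * \<kappa> powr (2*b+1) * h powr (2*a+1) * \<zeta> powr (-c-2)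
     \<longrightarrow> (\<forall>n. \<epsilon>s n \<le> (\<kappa> * h / \<zeta>) ^ (2^n - 1) * \<epsilon> \<and>
              (\<zeta>s n > 0 \<longrightarrow> \<eta> n < \<sigma> / \<zeta>s n))"
proof ((intro exI[of _ "12 * C * 16 powr a * 2 powr c + 1"] conjI allI impI; (elim conjE)?), goal_cases)
  case 1
  have "0 \<le> 12 * C * 16 powr a * 2 powr c" using assms by simp
  then show ?case by linarith
next
  case (2 \<kappa> h \<nu> \<zeta>s \<eta> \<epsilon>s \<zeta> \<epsilon> \<sigma> n)
  then show ?case
    using doubly_exponential_decay_with_constant(1)[of a c C \<kappa> h \<zeta>s \<eta> \<epsilon>s \<nu> b] assms by auto
next
  case (3 \<kappa> h \<nu> \<zeta>s \<eta> \<epsilon>s \<zeta> \<epsilon> \<sigma> n)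
  then have "\<eta> n * \<zeta>s n < \<sigma>"
    using doubly_exponential_decay_with_constant(2)[of a c C \<kappa> h \<zeta>s \<eta> \<epsilon>s \<nu> b] assms by auto
  with "3" show ?case by (simp add: less_divide_eq)
qed

end
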